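(* Let $m,n\ge1$. If there exists a KA$(m,n)$ and there exists a pair of orthogonal diagonal Latin squares of order $n$, then there exists an $m$-SCMS$(n)$.
   Context: $I_k=\{0,\dots,k-1\}$. A Kotzig array KA$(m,n)$ is an $m\times n$ array in which each row is a permutation of $\{0,1,\dots,n-1\}$ and all column sums are equal. A Latin square of order $n$ over an $n$-set $S$ is an $n\times n$ array each of whose rows and columns is a permutation of $S$; it is diagonal if its main diagonal $(a_{i,i})$ and back diagonal $(a_{i,n-1-i})$ are also permutations of $S$. Two Latin squares of order $n$ are orthogonal if, when superimposed, each ordered pair of symbols occurs exactly once. An MS$(n)$ is an $n\times n$ matrix with entries exactly $0,\dots,n^2-1$ whose row sums, column sums and two diagonal sums are all equal. $S_2(n)=\frac1n\sum_{k=0}^{n^2-1}k^2$. An $m$-SCMS$(n)$ is a list $B_0,\dots,B_{m-1}$ of (not necessarily distinct) MS$(n)$s, $B_s=(b^{(s)}_{i,j})$, such that $\sum_{s\in I_m}\sum_{j\in I_n}(b^{(s)}_{i,j})^{2}=mS_{2}(n)$ for every $i$, $\sum_{s\in I_m}\sum_{i\in I_n}(b^{(s)}_{i,j})^{2}=mS_{2}(n)$ for every $j$, $\sum_{s}\sum_{i}(b^{(s)}_{i,i})^{2}=mS_{2}(n)$, and $\sum_{s}\sum_{i}(b^{(s)}_{i,n-1-i})^{2}=mS_{2}(n)$. *)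

theory Defs
  imports Complex_Main
begin

text \<open>Arrays are represented as functions nat => nat => _, indexed by row i and column j,
  only meaningful for i < rows, j < cols. I_k = {0..<k}.\<close>

definition kotzig_array :: "nat \<Rightarrow> nat \<Rightarrow> (nat \<Rightarrow> nat \<Rightarrow> nat) \<Rightarrow> bool" where
  "kotzig_array m n A \<longleftrightarrow>
     (\<forall>i<m. bij_betw (\<lambda>j. A i j) {0..<n} {0..<n}) \<and>
     (\<forall>j<n. \<forall>j'<n. (\<Sum>i<m. A i j) = (\<Sum>i<m. A i j'))"

definition latin_square :: "nat \<Rightarrow> 'a set \<Rightarrow> (nat \<Rightarrow> nat \<Rightarrow> 'a) \<Rightarrow> bool" where
  "latin_square n S L \<longleftrightarrow> finite S \<and> card S = n \<and>
     (\<forall>i<n. bij_betw (\<lambda>j. L i j) {0..<n} S) \<and>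
     (\<forall>j<n. bij_betw (\<lambda>i. L i j) {0..<n} S)"

definition diagonal_latin_square :: "nat \<Rightarrow> 'a set \<Rightarrow> (nat \<Rightarrow> nat \<Rightarrow> 'a) \<Rightarrow> bool" where
  "diagonal_latin_square n S L \<longleftrightarrow> latin_square n S L \<and>
     bij_betw (\<lambda>i. L i i) {0..<n} S \<and>
     bij_betw (\<lambda>i. L i (n - 1 - i)) {0..<n} S"

definition orthogonal :: "nat \<Rightarrow> 'a set \<Rightarrow> 'b set \<Rightarrow> (nat \<Rightarrow> nat \<Rightarrow> 'a) \<Rightarrow> (nat \<Rightarrow> nat \<Rightarrow> 'b) \<Rightarrow> bool" where
  "orthogonal n S T L1 L2 \<longleftrightarrow>
     bij_betw (\<lambda>(i, j). (L1 i j, L2 i j)) ({0..<n} \<times> {0..<n}) (S \<times> T)"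

definition magic_square :: "nat \<Rightarrow> (nat \<Rightarrow> nat \<Rightarrow> nat) \<Rightarrow> bool" where
  "magic_square n B \<longleftrightarrow>
     bij_betw (\<lambda>(i, j). B i j) ({0..<n} \<times> {0..<n}) {0..<n^2} \<and>
     (\<exists>c. (\<forall>i<n. (\<Sum>j<n. B i j) = c) \<and> (\<forall>j<n. (\<Sum>i<n. B i j) = c) \<and>
          (\<Sum>i<n. B i i) = c \<and> (\<Sum>i<n. B i (n - 1 - i)) = c)"

definition S2 :: "nat \<Rightarrow> real" where
  "S2 n = (\<Sum>k<n^2. real (k^2)) / real n"

definition SCMS :: "nat \<Rightarrow> nat \<Rightarrow> (nat \<Rightarrow> nat \<Rightarrow> nat \<Rightarrow> nat) \<Rightarrow> bool" where
  "SCMS m n B \<longleftrightarrow>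
     (\<forall>s<m. magic_square n (B s)) \<and>
     (\<forall>i<n. (\<Sum>s<m. \<Sum>j<n. real ((B s i j)^2)) = real m * S2 n) \<and>
     (\<forall>j<n. (\<Sum>s<m. \<Sum>i<n. real ((B s i j)^2)) = real m * S2 n) \<and>
     (\<Sum>s<m. \<Sum>i<n. real ((B s i i)^2)) = real m * S2 n \<and>
     (\<Sum>s<m. \<Sum>i<n. real ((B s i (n - 1 - i))^2)) = real m * S2 n"

end

theory Submission
  imports Defs
begin

text \<open>Relabel the two orthogonal diagonal Latin squares as P, Q with symbols 0, ..., n - 1 and
  put B_s(i, j) = n A_s(P(i, j)) + Q(i, j) for the rows A_s of the Kotzig array. Orthogonality
  makes each B_s a bijection onto 0, ..., n^2 - 1, and since P and Q permute the symbols along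
  every row, column and diagonal, each B_s is magic. In the sum of squares over all s along such a
  line, the cross term sees A only through its constant column sum, so this sum is the same F for
  every line; counting all n rows gives n F = m (0^2 + ... + (n^2 - 1)^2), i.e. F = m S_2(n).\<close>

definition magic_lines :: "nat \<Rightarrow> (nat \<Rightarrow> nat \<times> nat) set" where
  "magic_lines n = (\<lambda>i j. (i, j)) ` {..<n} \<union> (\<lambda>j i. (i, j)) ` {..<n} \<union>
     {\<lambda>i. (i, i), \<lambda>i. (i, n - 1 - i)}"

lemma ball_magic_lines:
  "(\<forall>l\<in>magic_lines n. P l) \<longleftrightarrow>
     (\<forall>i<n. P (\<lambda>j. (i, j))) \<and> (\<forall>j<n. P (\<lambda>i. (i, j))) \<and>
     P (\<lambda>i. (i, i)) \<and> P (\<lambda>i. (i, n - 1 - i))"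
  by (auto simp: magic_lines_def)

lemma diagonal_latin_square_iff_magic_lines:
  "diagonal_latin_square n S L \<longleftrightarrow>
     finite S \<and> card S = n \<and> (\<forall>l\<in>magic_lines n. bij_betw (case_prod L \<circ> l) {..<n} S)"
  by (auto simp: diagonal_latin_square_def latin_square_def ball_magic_lines o_def atLeast0LessThan)

lemma magic_square_iff_magic_lines:
  "magic_square n B \<longleftrightarrow>
     bij_betw (case_prod B) ({..<n} \<times> {..<n}) {..<n^2} \<and>
     (\<exists>c. \<forall>l\<in>magic_lines n. (\<Sum>k<n. case_prod B (l k)) = c)"
  by (simp add: magic_square_def ball_magic_lines atLeast0LessThan)

lemma SCMS_iff_magic_lines:
  "SCMS m n B \<longleftrightarrow> (\<forall>s<m. magic_square n (B s)) \<and>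
     (\<forall>l\<in>magic_lines n. (\<Sum>s<m. \<Sum>k<n. real ((case_prod (B s) (l k))^2)) = real m * S2 n)"
  by (simp add: SCMS_def ball_magic_lines)

lemma diagonal_latin_square_relabel:
  assumes "diagonal_latin_square n S L" and "bij_betw f S T"
  shows "diagonal_latin_square n T (\<lambda>i j. f (L i j))"
proof -
  have "case_prod (\<lambda>i j. f (L i j)) \<circ> l = f \<circ> (case_prod L \<circ> l)" for l :: "nat \<Rightarrow> nat \<times> nat"
    by (simp add: fun_eq_iff split_beta)
  with assms show ?thesis
    by (auto simp: diagonal_latin_square_iff_magic_lines bij_betw_finite bij_betw_same_card
        intro: bij_betw_trans)
qed

lemma orthogonal_relabel:
  assumes "orthogonal n S T L1 L2" and "bij_betw f S S'" and "bij_betw g T T'"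
  shows "orthogonal n S' T' (\<lambda>i j. f (L1 i j)) (\<lambda>i j. g (L2 i j))"
proof -
  have "map_prod f g \<circ> (\<lambda>(i, j). (L1 i j, L2 i j)) = (\<lambda>(i, j). (f (L1 i j), g (L2 i j)))"
    by (simp add: fun_eq_iff)
  with bij_betw_trans[OF assms(1)[unfolded orthogonal_def] bij_betw_map_prod[OF assms(2,3)]]
  show ?thesis
    by (simp add: orthogonal_def)
qed

lemma bij_betw_digits:
  "bij_betw (\<lambda>(u, v). n * u + v) ({..<n} \<times> {..<n}) {..<(n::nat)^2}"
proof -
  have "inj_on (\<lambda>(u, v). n * u + v) ({..<n} \<times> {..<n})"
  proof (rule inj_onI, clarsimp)
    fix u v u' v' assume "v < n" "v' < n" "n * u + v = n * u' + v'"
    then have "(n * u + v) div n = (n * u' + v') div n" "(n * u + v) mod n = (n * u' + v') mod n"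
      by simp_all
    with \<open>v < n\<close> \<open>v' < n\<close> show "u = u' \<and> v = v'"
      by simp
  qed
  moreover have "(\<lambda>(u, v). n * u + v) ` ({..<n} \<times> {..<n}) \<subseteq> {..<n^2}"
  proof clarsimp
    fix u v assume "u < n" "v < n"
    then have "n * u + v < n * (u + 1)" by simp
    also have "\<dots> \<le> n * n" using \<open>u < n\<close> by (intro mult_le_mono2) simp
    finally show "n * u + v < n^2" by (simp add: power2_eq_square)
  qed
  ultimately show ?thesis
    by (simp add: bij_betw_def card_subset_eq card_image power2_eq_square card_cartesian_product)
qed

lemma sum_digits_permutations:
  fixes a p q :: "nat \<Rightarrow> nat"
  assumes "bij_betw a {..<n} {..<n}" and "bij_betw p {..<n} {..<n}" and "bij_betw q {..<n} {..<n}"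
  shows "(\<Sum>k<n. n * a (p k) + q k) = (n + 1) * (\<Sum>k<n. k)"
proof -
  have "(\<Sum>k<n. a (p k)) = (\<Sum>k<n. k)"
    using sum.reindex_bij_betw[OF bij_betw_trans[OF assms(2,1)], of id] by simp
  moreover have "(\<Sum>k<n. q k) = (\<Sum>k<n. k)"
    using sum.reindex_bij_betw[OF assms(3), of id] by simp
  ultimately show ?thesis
    by (simp add: sum.distrib sum_distrib_left[symmetric])
qed

lemma kotzig_array_sum_squares_digits:
  fixes A :: "nat \<Rightarrow> nat \<Rightarrow> nat" and p q :: "nat \<Rightarrow> nat"
  assumes KA: "kotzig_array m n A"
    and p: "bij_betw p {..<n} {..<n}" and q: "bij_betw q {..<n} {..<n}"
  shows "(\<Sum>s<m. \<Sum>k<n. (n * A s (p k) + q k)^2)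
       = (n^2 * m + m) * (\<Sum>k<n. k^2) + 2 * n * (\<Sum>s<m. A s 0) * (\<Sum>k<n. k)"
proof -
  have "(\<Sum>k<n. (A s (p k))^2) = (\<Sum>k<n. k^2)" if "s < m" for s
  proof -
    have "bij_betw (A s \<circ> p) {..<n} {..<n}"
      using KA that p by (auto simp: kotzig_array_def atLeast0LessThan intro: bij_betw_trans)
    from sum.reindex_bij_betw[OF this, of "\<lambda>k. k^2"] show ?thesis by simp
  qed
  then have A_squares: "(\<Sum>s<m. \<Sum>k<n. (A s (p k))^2) = m * (\<Sum>k<n. k^2)"
    by simp
  have column: "(\<Sum>s<m. A s (p k)) = (\<Sum>s<m. A s 0)" if "k < n" for k
  proof -
    have "p k < n" "0 < n"
      using bij_betw_apply[OF p] that by auto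
    with KA show ?thesis
      unfolding kotzig_array_def by blast
  qed
  have "(\<Sum>s<m. \<Sum>k<n. A s (p k) * q k) = (\<Sum>k<n. (\<Sum>s<m. A s (p k)) * q k)"
    by (subst sum.swap) (simp add: sum_distrib_right)
  also have "\<dots> = (\<Sum>s<m. A s 0) * (\<Sum>k<n. q k)"
    by (simp add: column sum_distrib_left)
  also have "(\<Sum>k<n. q k) = (\<Sum>k<n. k)"
    using sum.reindex_bij_betw[OF q, of id] by simp
  finally have mixed: "(\<Sum>s<m. \<Sum>k<n. A s (p k) * q k) = (\<Sum>s<m. A s 0) * (\<Sum>k<n. k)" .
  have q_squares: "(\<Sum>k<n. (q k)^2) = (\<Sum>k<n. k^2)"
    using sum.reindex_bij_betw[OF q, of "\<lambda>k. k^2"] by simp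
  have "(\<Sum>s<m. \<Sum>k<n. (n * A s (p k) + q k)^2)
      = (\<Sum>s<m. \<Sum>k<n. n^2 * (A s (p k))^2 + 2 * n * (A s (p k) * q k) + (q k)^2)"
    by (intro sum.cong refl) (simp add: power2_sum power_mult_distrib algebra_simps)
  also have "\<dots> = n^2 * (\<Sum>s<m. \<Sum>k<n. (A s (p k))^2)
      + 2 * n * (\<Sum>s<m. \<Sum>k<n. A s (p k) * q k) + m * (\<Sum>k<n. (q k)^2)"
    by (simp add: sum.distrib sum_distrib_left)
  also have "\<dots> = (n^2 * m + m) * (\<Sum>k<n. k^2) + 2 * n * (\<Sum>s<m. A s 0) * (\<Sum>k<n. k)"
    unfolding A_squares mixed q_squares by (simp add: algebra_simps)
  finally show ?thesis .
qed

lemma sum_magic_square: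
  assumes "magic_square n B"
  shows "(\<Sum>i<n. \<Sum>j<n. f (B i j)) = (\<Sum>k<n^2. f k)"
proof -
  have "(\<Sum>i<n. \<Sum>j<n. f (B i j)) = (\<Sum>(i, j)\<in>{..<n} \<times> {..<n}. f (B i j))"
    by (rule sum.cartesian_product)
  also have "\<dots> = (\<Sum>k<n^2. f k)"
    using assms sum.reindex_bij_betw[of "case_prod B" "{..<n} \<times> {..<n}" "{..<n^2}" f]
    by (simp add: magic_square_iff_magic_lines split_def)
  finally show ?thesis .
qed

lemma S2_eq_uniform_row_square_sum:
  assumes "n \<ge> 1" and "\<And>s. s < m \<Longrightarrow> magic_square n (B s)"
    and "\<And>i. i < n \<Longrightarrow> (\<Sum>s<m. \<Sum>j<n. (B s i j)^2) = F"
  shows "real F = real m * S2 n"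
proof -
  have "n * F = (\<Sum>i<n. \<Sum>s<m. \<Sum>j<n. (B s i j)^2)"
    using assms(3) by simp
  also have "\<dots> = (\<Sum>s<m. \<Sum>i<n. \<Sum>j<n. (B s i j)^2)"
    by (rule sum.swap)
  also have "\<dots> = m * (\<Sum>k<n^2. k^2)"
    using sum_magic_square[OF assms(2), where f = "\<lambda>k. k^2"] by simp
  finally show ?thesis
    using \<open>n \<ge> 1\<close> unfolding S2_def
    by (metis nonzero_mult_div_cancel_left of_nat_eq_0_iff of_nat_mult of_nat_sum
        not_one_le_zero times_divide_eq_right)
qed

lemma SCMS_kotzig_array_orthogonal:
  fixes A P Q :: "nat \<Rightarrow> nat \<Rightarrow> nat"
  assumes "n \<ge> 1" and KA: "kotzig_array m n A"
    and "diagonal_latin_square n {..<n} P" and "diagonal_latin_square n {..<n} Q"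
    and orth: "orthogonal n {..<n} {..<n} P Q"
  shows "SCMS m n (\<lambda>s i j. n * A s (P i j) + Q i j)" (is "SCMS m n ?B")
proof -
  have rows: "bij_betw (A s) {..<n} {..<n}" if "s < m" for s
    using KA that by (simp add: kotzig_array_def atLeast0LessThan)
  have lines: "bij_betw (case_prod P \<circ> l) {..<n} {..<n}" "bij_betw (case_prod Q \<circ> l) {..<n} {..<n}"
    if "l \<in> magic_lines n" for l
    using assms(3,4) that by (simp_all add: diagonal_latin_square_iff_magic_lines)
  have B_line: "case_prod (?B s) (l k) = n * A s ((case_prod P \<circ> l) k) + (case_prod Q \<circ> l) k"
    for s l k
    by (simp add: split_beta)
  have magic: "magic_square n (?B s)" if "s < m" for s
  proof -
    have "bij_betw (\<lambda>(i, j). (P i j, Q i j)) ({..<n} \<times> {..<n}) ({..<n} \<times> {..<n})"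
      using orth by (simp add: orthogonal_def atLeast0LessThan)
    from bij_betw_trans[OF this bij_betw_trans[OF bij_betw_map_prod[OF rows[OF that] bij_betw_id]
          bij_betw_digits]]
    have "bij_betw (case_prod (?B s)) ({..<n} \<times> {..<n}) {..<n^2}"
      by (simp add: o_def split_def)
    moreover have "(\<Sum>k<n. case_prod (?B s) (l k)) = (n + 1) * (\<Sum>k<n. k)"
      if "l \<in> magic_lines n" for l
      unfolding B_line by (rule sum_digits_permutations[OF rows[OF \<open>s < m\<close>] lines[OF that]])
    ultimately show ?thesis
      unfolding magic_square_iff_magic_lines by blast
  qed
  define F where "F = (n^2 * m + m) * (\<Sum>k<n. k^2) + 2 * n * (\<Sum>s<m. A s 0) * (\<Sum>k<n. k)"
  have line_squares: "(\<Sum>s<m. \<Sum>k<n. (case_prod (?B s) (l k))^2) = F" if "l \<in> magic_lines n" for l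
    unfolding B_line F_def by (rule kotzig_array_sum_squares_digits[OF KA lines[OF that]])
  have row_squares: "(\<Sum>s<m. \<Sum>j<n. (?B s i j)^2) = F" if "i < n" for i
    using line_squares[of "Pair i"] that by (simp add: magic_lines_def)
  have "real F = real m * S2 n"
    using \<open>n \<ge> 1\<close> magic row_squares by (rule S2_eq_uniform_row_square_sum)
  then have "(\<Sum>s<m. \<Sum>k<n. real ((case_prod (?B s) (l k))^2)) = real m * S2 n"
    if "l \<in> magic_lines n" for l
    using line_squares[OF that] by (simp only: of_nat_sum[symmetric])
  with magic show ?thesis
    by (simp only: SCMS_iff_magic_lines) blast
qed

theorem lemma3:
  fixes m n :: nat
  assumes "m \<ge> 1" and "n \<ge> 1"
    and "\<exists>A. kotzig_array m n A"
    and "\<exists>(S :: nat set) (T :: nat set) (L1 :: nat \<Rightarrow> nat \<Rightarrow> nat) (L2 :: nat \<Rightarrow> nat \<Rightarrow> nat).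
           diagonal_latin_square n S L1 \<and> diagonal_latin_square n T L2 \<and> orthogonal n S T L1 L2"
  shows "\<exists>B. SCMS m n B"
proof -
  obtain A where KA: "kotzig_array m n A"
    using assms(3) by blast
  obtain S T :: "nat set" and L1 L2 :: "nat \<Rightarrow> nat \<Rightarrow> nat" where
    L1: "diagonal_latin_square n S L1" and L2: "diagonal_latin_square n T L2"
    and orth: "orthogonal n S T L1 L2"
    using assms(4) by blast
  obtain f where f: "bij_betw f S {..<n}"
    using L1 ex_bij_betw_finite_nat[of S]
    by (auto simp: diagonal_latin_square_iff_magic_lines atLeast0LessThan)
  obtain g where g: "bij_betw g T {..<n}"
    using L2 ex_bij_betw_finite_nat[of T]
    by (auto simp: diagonal_latin_square_iff_magic_lines atLeast0LessThan)
  show ?thesis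
    using SCMS_kotzig_array_orthogonal[OF \<open>n \<ge> 1\<close> KA
        diagonal_latin_square_relabel[OF L1 f] diagonal_latin_square_relabel[OF L2 g]
        orthogonal_relabel[OF orth f g]]
    by blast
qed

end
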